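(* Let $A$ be a two-dimensional evolution algebra over an arbitrary field $\mathbb{K}$ such that $A^2=A$. Then the square $\mathfrak{S}(A)$ is equal to one of $\mathfrak{D}_1,\mathfrak{D}_2,\mathfrak{D}_3,\mathfrak{D}_4,\mathfrak{D}_5$. Moreover, up to isomorphism: (i) if $\mathfrak{S}(A)=\mathfrak{D}_1$ then $A\cong A_1$ (and $A_1$ is the only such algebra); (ii) if $\mathfrak{S}(A)=\mathfrak{D}_2$ then $A\cong A_{2,\alpha}$ for some $\alpha\in\mathbb{K}^\times$, and the isomorphism classes of such algebras correspond bijectively to the elements $\widetilde{\alpha}\in G_3/\!\sim$ via $\widetilde\alpha\mapsto A_{2,\alpha}$; (iii) if $\mathfrak{S}(A)=\mathfrak{D}_3$ then $A\cong A_{3,\alpha}$ for some $\alpha\in\mathbb{K}^\times$, and for each $\alpha\in\mathbb{K}^\times$ there is exactly one such algebra, $A_{3,\alpha}$ (distinct $\alpha$ giving non-isomorphic algebras); (iv) if $\mathfrak{S}(A)=\mathfrak{D}_4$ then $A\cong A_{4,\alpha}$ for some $\alpha\in\mathbb{K}^\times$, and for each $\alpha\in\mathbb{K}^\times$ there is exactly one such algebra, $A_{4,\alpha}$ (distinct $\alpha$ giving non-isomorphic algebras); (v) if $\mathfrak{S}(A)=\mathfrak{D}_5$ then $A\cong A_{5,\alpha,\beta}$ for some $\alpha,\beta\in\mathbb{K}^\times$ with $\alpha\beta\neq1$, and for each such pair $(\alpha,\beta)$ there is exactly one such algebra, $A_{5,\alpha,\beta}$, up to permutation of the components of the pair (i.e.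 $A_{5,\alpha,\beta}\cong A_{5,\alpha',\beta'}$ iff $(\alpha',\beta')\in\{(\alpha,\beta),(\beta,\alpha)\}$).
   Context: An evolution algebra over a field $\mathbb{K}$ is a $\mathbb{K}$-algebra $A$ with a basis $\{e_i\}$ (a natural basis) such that $e_ie_j=0$ for $i\neq j$. For a two-dimensional evolution algebra with natural basis $B=\{e_1,e_2\}$ write $e_1^2=\omega_{11}e_1+\omega_{21}e_2$, $e_2^2=\omega_{12}e_1+\omega_{22}e_2$. The pseudo-square of $A$ relative to $B$ is the set of "edges" $E_B\subseteq\{L,T,R,D\}$ (left, top, right, bottom), where $L\in E_B$ iff $\omega_{11}\neq0$, $T\in E_B$ iff $\omega_{12}\neq0$, $R\in E_B$ iff $\omega_{22}\neq0$, $D\in E_B$ iff $\omega_{21}\neq0$. The square $\mathfrak{S}(A)$ is the set of all pseudo-squares $E_B$ as $B$ ranges over all natural bases of $A$. Define the following sets of pseudo-squares: $\mathfrak{D}_1=\{\{L,R\}\}$, $\mathfrak{D}_2=\{\{T,D\}\}$, $\mathfrak{D}_3=\{\{L,T,R\},\{L,R,D\}\}$, $\mathfrak{D}_4=\{\{L,T,D\},\{T,R,D\}\}$, $\mathfrak{D}_5=\{\{L,T,R,D\}\}$. The algebras (each with natural basis $\{e_1,e_2\}$): $A_1$: $e_1^2=e_1$, $e_2^2=e_2$; $A_{2,\alpha}$: $e_1^2=e_2$, $e_2^2=\alpha e_1$; $A_{3,\alpha}$: $e_1^2=e_1$, $e_2^2=\alpha e_1+e_2$; $A_{4,\alpha}$: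 $e_1^2=\alpha e_2$, $e_2^2=e_1+e_2$; $A_{5,\alpha,\beta}$: $e_1^2=e_1+\beta e_2$, $e_2^2=\alpha e_1+e_2$ (here $\alpha,\beta\in\mathbb{K}^\times$, and $\alpha\beta\neq1$ for $A_{5,\alpha,\beta}$). $G_3$ denotes the group $\mathbb{K}^\times/(\mathbb{K}^\times)^3$, $\overline\rho$ the class of $\rho\in\mathbb{K}^\times$; $\sim$ is the equivalence relation on $G_3$ with $\overline\alpha\sim\overline\beta$ iff $\overline\alpha=\overline\beta$ or $\overline\alpha=\overline\beta^2$, and $\widetilde\alpha$ denotes the class of $\overline\alpha$ in $G_3/\!\sim$. *)

theory Defs
  imports Main "HOL-Library.Product_Plus"
begin

text \<open>A two-dimensional evolution algebra over a field 'a is modelled on 'a \<times> 'a,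
  the standard basis e1 = (1,0), e2 = (0,1) being a natural basis.  The algebra is
  determined by the pair (e1^2, e2^2), where e1^2 = (w11, w21) and e2^2 = (w12, w22).\<close>

type_synonym 'a evalg = "('a \<times> 'a) \<times> ('a \<times> 'a)"

definition smul :: "'a::field \<Rightarrow> 'a \<times> 'a \<Rightarrow> 'a \<times> 'a" where
  "smul c x = (c * fst x, c * snd x)"

definition mult :: "'a::field evalg \<Rightarrow> 'a \<times> 'a \<Rightarrow> 'a \<times> 'a \<Rightarrow> 'a \<times> 'a" where
  "mult A x y = smul (fst x * fst y) (fst A) + smul (snd x * snd y) (snd A)"

text \<open>A^2 = A: every element is a finite sum of products (for a field this is the span
  of all products, since scalar multiples of products are products).\<close>
definition square_full :: "'a::field evalg \<Rightarrow> bool" where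
  "square_full A \<longleftrightarrow> (\<forall>z. \<exists>n xs ys. z = (\<Sum>i<(n::nat). mult A (xs i) (ys i)))"

definition lin_indep2 :: "'a::field \<times> 'a \<Rightarrow> 'a \<times> 'a \<Rightarrow> bool" where
  "lin_indep2 u v \<longleftrightarrow> (\<forall>a b. smul a u + smul b v = 0 \<longrightarrow> a = 0 \<and> b = 0)"

definition natural_basis :: "'a::field evalg \<Rightarrow> 'a \<times> 'a \<Rightarrow> 'a \<times> 'a \<Rightarrow> bool" where
  "natural_basis A u v \<longleftrightarrow> lin_indep2 u v \<and> mult A u v = 0 \<and> mult A v u = 0"

definition coord :: "'a::field \<times> 'a \<Rightarrow> 'a \<times> 'a \<Rightarrow> 'a \<times> 'a \<Rightarrow> 'a \<times> 'a" where
  "coord u v w = (THE ab. w = smul (fst ab) u + smul (snd ab) v)"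

datatype edge = L | T | R | D

text \<open>Relative to (u,v): u^2 = w11 u + w21 v, v^2 = w12 u + w22 v.
  L iff w11 \<noteq> 0, T iff w12 \<noteq> 0, R iff w22 \<noteq> 0, D iff w21 \<noteq> 0.\<close>
definition pseudo_square :: "'a::field evalg \<Rightarrow> 'a \<times> 'a \<Rightarrow> 'a \<times> 'a \<Rightarrow> edge set" where
  "pseudo_square A u v =
     {e. (e = L \<and> fst (coord u v (mult A u u)) \<noteq> 0)
       \<or> (e = T \<and> fst (coord u v (mult A v v)) \<noteq> 0)
       \<or> (e = R \<and> snd (coord u v (mult A v v)) \<noteq> 0)
       \<or> (e = D \<and> snd (coord u v (mult A u u)) \<noteq> 0)}"

definition square :: "'a::field evalg \<Rightarrow> edge set set" where
  "square A = {pseudo_square A u v | u v. natural_basis A u v}"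

definition D1 :: "edge set set" where "D1 = {{L, R}}"
definition D2 :: "edge set set" where "D2 = {{T, D}}"
definition D3 :: "edge set set" where "D3 = {{L, T, R}, {L, R, D}}"
definition D4 :: "edge set set" where "D4 = {{L, T, D}, {T, R, D}}"
definition D5 :: "edge set set" where "D5 = {{L, T, R, D}}"

definition evo_iso :: "'a::field evalg \<Rightarrow> 'a evalg \<Rightarrow> bool" where
  "evo_iso A B \<longleftrightarrow> (\<exists>f. bij f \<and> (\<forall>x y. f (x + y) = f x + f y)
      \<and> (\<forall>c x. f (smul c x) = smul c (f x))
      \<and> (\<forall>x y. f (mult A x y) = mult B (f x) (f y)))"

definition A1 :: "'a::field evalg" where "A1 = ((1, 0), (0, 1))"
definition A2 :: "'a::field \<Rightarrow> 'a evalg" where "A2 \<alpha> = ((0, 1), (\<alpha>, 0))"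
definition A3 :: "'a::field \<Rightarrow> 'a evalg" where "A3 \<alpha> = ((1, 0), (\<alpha>, 1))"
definition A4 :: "'a::field \<Rightarrow> 'a evalg" where "A4 \<alpha> = ((0, \<alpha>), (1, 1))"
definition A5 :: "'a::field \<Rightarrow> 'a \<Rightarrow> 'a evalg" where "A5 \<alpha> \<beta> = ((1, \<beta>), (\<alpha>, 1))"

text \<open>Equality of classes in G3 = K^x/(K^x)^3 (for nonzero arguments).\<close>
definition cube_eq :: "'a::field \<Rightarrow> 'a \<Rightarrow> bool" where
  "cube_eq \<alpha> \<beta> \<longleftrightarrow> (\<exists>c. c \<noteq> 0 \<and> \<alpha> = c ^ 3 * \<beta>)"

definition G3_sim :: "'a::field \<Rightarrow> 'a \<Rightarrow> bool" where
  "G3_sim \<alpha> \<beta> \<longleftrightarrow> cube_eq \<alpha> \<beta> \<or> cube_eq \<alpha> (\<beta> ^ 2)"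

end

theory Submission
  imports Defs
begin

text \<open>If A^2 = A then e1^2 and e2^2 are linearly independent (a nonzero functional vanishing on
  both would vanish on all of A^2).  Consequently e_i e_j = 0 forces every natural basis to be
  (a e1, d e2) or (a e2, d e1) with a, d nonzero, and relative to such a basis the structure
  constants of A are those of A, or of A with the indices swapped, rescaled by nonzero factors.
  So the pseudo-square only records which structure constants vanish, the square consists of
  the patterns of A and of its swap, and A is isomorphic to B iff the constants of A are a
  rescaling of those of B or of its swap.  Solving the rescaling equations in each zero pattern
  gives the normal forms A1, ..., A5 and their isomorphism criteria; for A2 they say that
  alpha = c^3 beta or alpha = c^3 beta^2.\<close>

lemma smul_Pair [simp]: "smul c (x, y) = (c * x, c * y)"
  by (simp add: smul_def)

lemma smul_0_left [simp]: "smul 0 x = 0"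
  by (simp add: smul_def zero_prod_def)

lemma smul_1_left [simp]: "smul 1 x = x"
  by (simp add: smul_def)

lemma mult_Pair:
  "mult ((p, q), (r, s)) (x1, x2) (y1, y2) = (x1 * y1 * p + x2 * y2 * r, x1 * y1 * q + x2 * y2 * s)"
  by (simp add: mult_def)

lemma mult_commute: "mult A x y = mult A y x"
  by (simp add: mult_def mult.commute)

definition of_coord :: "'a::field \<times> 'a \<Rightarrow> 'a \<times> 'a \<Rightarrow> 'a \<times> 'a \<Rightarrow> 'a \<times> 'a" where
  "of_coord u v x = smul (fst x) u + smul (snd x) v"

lemma of_coord_add: "of_coord u v (x + y) = of_coord u v x + of_coord u v y"
  by (simp add: of_coord_def smul_def algebra_simps)

lemma of_coord_smul: "of_coord u v (smul c x) = smul c (of_coord u v x)"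
  by (simp add: of_coord_def smul_def algebra_simps)

lemma of_coord_of_coord:
  "of_coord u v (of_coord P Q x) = of_coord (of_coord u v P) (of_coord u v Q) x"
  by (simp add: of_coord_def smul_def algebra_simps)

lemma mult_eq_of_coord: "mult A x y = of_coord (fst A) (snd A) (fst x * fst y, snd x * snd y)"
  by (simp add: mult_def of_coord_def)

lemma mult_of_coord_bilinear:
  "mult B (of_coord u v x) (of_coord u v y)
     = of_coord (mult B u u) (mult B v v) (fst x * fst y, snd x * snd y)
       + smul (fst x * snd y + snd x * fst y) (mult B u v)"
proof -
  obtain p q r s u1 u2 v1 v2 x1 x2 y1 y2 where
    "B = ((p, q), (r, s))" "u = (u1, u2)" "v = (v1, v2)" "x = (x1, x2)" "y = (y1, y2)"
    by (metis prod.collapse)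
  then show ?thesis
    by (simp add: mult_def of_coord_def) (simp add: algebra_simps)
qed

lemma mult_of_coord:
  assumes "mult B u v = 0"
  shows "mult B (of_coord u v x) (of_coord u v y)
           = of_coord (mult B u u) (mult B v v) (fst x * fst y, snd x * snd y)"
  using assms by (simp add: mult_of_coord_bilinear smul_def zero_prod_def)

lemma lin_indep2_iff_det: "lin_indep2 u v \<longleftrightarrow> fst u * snd v \<noteq> snd u * fst v"
proof -
  obtain u1 u2 v1 v2 where uv: "u = (u1, u2)" "v = (v1, v2)"
    by (metis prod.collapse)
  have "lin_indep2 (u1, u2) (v1, v2) \<longleftrightarrow> u1 * v2 \<noteq> u2 * v1"
  proof
    assume li: "lin_indep2 (u1, u2) (v1, v2)"
    show "u1 * v2 \<noteq> u2 * v1"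
    proof
      assume "u1 * v2 = u2 * v1"
      then have "smul v2 (u1, u2) + smul (- u2) (v1, v2) = 0"
        "smul v1 (u1, u2) + smul (- u1) (v1, v2) = 0"
        by (simp_all add: zero_prod_def algebra_simps)
      then have "u1 = 0" "u2 = 0"
        using li unfolding lin_indep2_def by (metis neg_equal_0_iff_equal)+
      then have "smul 1 (u1, u2) + smul 0 (v1, v2) = 0"
        by (simp add: zero_prod_def)
      with li show False
        unfolding lin_indep2_def using one_neq_zero by blast
    qed
  next
    assume det: "u1 * v2 \<noteq> u2 * v1"
    show "lin_indep2 (u1, u2) (v1, v2)"
      unfolding lin_indep2_def
    proof (intro allI impI)
      fix a b assume "smul a (u1, u2) + smul b (v1, v2) = 0"
      then have 1: "a * u1 + b * v1 = 0" and 2: "a * u2 + b * v2 = 0"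
        by (simp_all add: zero_prod_def)
      have "a * (u1 * v2 - u2 * v1) = v2 * (a * u1 + b * v1) - v1 * (a * u2 + b * v2)"
        "b * (u1 * v2 - u2 * v1) = u1 * (a * u2 + b * v2) - u2 * (a * u1 + b * v1)"
        by (simp_all add: algebra_simps)
      then have "a * (u1 * v2 - u2 * v1) = 0" "b * (u1 * v2 - u2 * v1) = 0"
        by (simp_all only: 1 2 mult_zero_right diff_self)
      with det show "a = 0 \<and> b = 0"
        by simp
    qed
  qed
  then show ?thesis
    by (simp add: uv)
qed

lemma coord_of_coord:
  assumes "lin_indep2 u v"
  shows "coord u v (of_coord u v x) = x"
  unfolding coord_def
proof (rule the_equality)
  show "of_coord u v x = smul (fst x) u + smul (snd x) v"
    by (simp add: of_coord_def)
next
  fix y assume "of_coord u v x = smul (fst y) u + smul (snd y) v"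
  then have "smul (fst y - fst x) u + smul (snd y - snd x) v = 0"
    by (simp add: of_coord_def smul_def zero_prod_def algebra_simps)
  then have "fst y - fst x = 0 \<and> snd y - snd x = 0"
    using assms unfolding lin_indep2_def by blast
  then show "y = x"
    by (simp add: prod_eq_iff)
qed

text \<open>Cramer's rule.\<close>
lemma of_coord_surj:
  assumes "lin_indep2 u v"
  shows "\<exists>x. of_coord u v x = w"
proof -
  obtain u1 u2 v1 v2 w1 w2 where uvw: "u = (u1, u2)" "v = (v1, v2)" "w = (w1, w2)"
    by (metis prod.collapse)
  define \<delta> where "\<delta> = u1 * v2 - u2 * v1"
  have "\<delta> \<noteq> 0"
    using assms by (simp add: \<delta>_def uvw lin_indep2_iff_det)
  then have "of_coord u v ((w1 * v2 - w2 * v1) / \<delta>, (u1 * w2 - u2 * w1) / \<delta>) = w"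
    by (simp add: uvw of_coord_def field_simps) (simp add: \<delta>_def algebra_simps)
  then show ?thesis ..
qed

lemma of_coord_coord:
  assumes "lin_indep2 u v"
  shows "of_coord u v (coord u v w) = w"
  using of_coord_surj[OF assms] coord_of_coord[OF assms] by metis

lemma bij_of_coord:
  assumes "lin_indep2 u v"
  shows "bij (of_coord u v)"
  by (rule o_bij[where g = "coord u v"])
    (simp_all add: fun_eq_iff coord_of_coord of_coord_coord assms)

lemma square_full_iff_lin_indep2: "square_full A \<longleftrightarrow> lin_indep2 (fst A) (snd A)"
proof
  assume full: "square_full A"
  obtain p q r s where A: "A = ((p, q), (r, s))"
    by (metis prod.collapse)
  show "lin_indep2 (fst A) (snd A)"
  proof (rule ccontr)
    assume "\<not> lin_indep2 (fst A) (snd A)"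
    then have "\<not> lin_indep2 (p, r) (q, s)"
      by (simp add: A lin_indep2_iff_det mult.commute)
    then obtain l m where lm: "(l, m) \<noteq> (0, 0)" "l * p + m * q = 0" "l * r + m * s = 0"
      by (auto simp: lin_indep2_def prod_eq_iff)
    txt \<open>The nonzero functional \<open>(l, m)\<close> kills both squares, hence every sum of products.\<close>
    have kills_products: "l * fst (mult A x y) + m * snd (mult A x y) = 0" for x y
    proof -
      have "l * fst (mult A x y) + m * snd (mult A x y)
              = fst x * fst y * (l * p + m * q) + snd x * snd y * (l * r + m * s)"
        by (simp add: A mult_def algebra_simps)
      then show ?thesis
        using lm by simp
    qed
    have kills_sums: "l * fst (\<Sum>i<n. mult A (xs i) (ys i)) + m * snd (\<Sum>i<n. mult A (xs i) (ys i)) = 0"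
      for n :: nat and xs ys
      by (simp add: fst_sum snd_sum sum_distrib_left flip: sum.distrib add: kills_products)
    define z :: "'a \<times> 'a" where "z = (if l \<noteq> 0 then (1, 0) else (0, 1))"
    obtain n xs ys where "z = (\<Sum>i<(n::nat). mult A (xs i) (ys i))"
      using full unfolding square_full_def by blast
    with kills_sums have "l * fst z + m * snd z = 0"
      by simp
    with lm show False
      by (simp add: z_def split: if_splits)
  qed
next
  assume li: "lin_indep2 (fst A) (snd A)"
  show "square_full A"
    unfolding square_full_def
  proof
    fix z
    obtain x where "of_coord (fst A) (snd A) x = z"
      using of_coord_surj[OF li] by blast
    then have "z = mult A (fst x, 0) (1, 0) + mult A (0, snd x) (0, 1)"
      by (auto simp: mult_eq_of_coord of_coord_def smul_def prod_eq_iff)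
    then show "\<exists>n xs ys. z = (\<Sum>i<(n::nat). mult A (xs i) (ys i))"
      by (intro exI[of _ 2] exI[of _ "\<lambda>i. if i = 0 then (fst x, 0) else (0, snd x)"]
          exI[of _ "\<lambda>i. if i = 0 then (1, 0) else (0, 1)"])
        (simp add: numeral_2_eq_2)
  qed
qed

definition rebase :: "'a::field evalg \<Rightarrow> 'a \<times> 'a \<Rightarrow> 'a \<times> 'a \<Rightarrow> 'a evalg" where
  "rebase A u v = (coord u v (mult A u u), coord u v (mult A v v))"

lemma coord_eq_iff:
  assumes "lin_indep2 u v"
  shows "coord u v w = x \<longleftrightarrow> w = of_coord u v x"
  using coord_of_coord[OF assms] of_coord_coord[OF assms] by metis

lemma rebase_eq_iff:
  assumes "lin_indep2 u v"
  shows "rebase B u v = A \<longleftrightarrow>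
           mult B u u = of_coord u v (fst A) \<and> mult B v v = of_coord u v (snd A)"
  by (cases A) (simp add: rebase_def coord_eq_iff[OF assms])

lemma linear_eq_of_coord:
  assumes "\<And>x y. f (x + y) = f x + f y" and "\<And>c x. f (smul c x) = smul c (f x)"
  shows "f x = of_coord (f (1, 0)) (f (0, 1)) x"
proof -
  have "f x = f (smul (fst x) (1, 0) + smul (snd x) (0, 1))"
    by simp
  also have "\<dots> = smul (fst x) (f (1, 0)) + smul (snd x) (f (0, 1))"
    by (simp only: assms)
  finally show ?thesis
    by (simp add: of_coord_def)
qed

lemma natural_basis_if_evo_iso:
  assumes "evo_iso A B"
  shows "\<exists>u v. natural_basis B u v \<and> rebase B u v = A"
proof -
  obtain f where "bij f" and f_add: "\<And>x y. f (x + y) = f x + f y"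
    and f_smul: "\<And>c x. f (smul c x) = smul c (f x)"
    and f_mult: "\<And>x y. f (mult A x y) = mult B (f x) (f y)"
    using assms unfolding evo_iso_def by blast
  define u where "u = f (1, 0)"
  define v where "v = f (0, 1)"
  have f_eq: "f x = of_coord u v x" for x
    unfolding u_def v_def using f_add f_smul by (rule linear_eq_of_coord)
  have f_zero: "f 0 = 0"
    using f_add[of 0 0] by simp
  have "lin_indep2 u v"
    unfolding lin_indep2_def
  proof (intro allI impI)
    fix a b assume "smul a u + smul b v = 0"
    then have "f (a, b) = f 0"
      unfolding f_zero by (simp add: f_eq of_coord_def)
    then have "(a, b) = 0"
      using \<open>bij f\<close> by (simp add: bij_def inj_eq)
    then show "a = 0 \<and> b = 0"
      by (simp add: zero_prod_def)
  qed
  moreover have "mult B u v = 0"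
    using f_mult[of "(1, 0)" "(0, 1)"] f_zero by (simp add: u_def v_def mult_def)
  moreover have "mult B v u = 0"
    using \<open>mult B u v = 0\<close> mult_commute[of B v u] by simp
  moreover have "mult B u u = of_coord u v (fst A)" "mult B v v = of_coord u v (snd A)"
    using f_mult[of "(1, 0)" "(1, 0)", folded u_def] f_mult[of "(0, 1)" "(0, 1)", folded v_def]
    by (simp_all add: mult_def f_eq)
  ultimately show ?thesis
    by (intro exI[of _ u] exI[of _ v]) (simp add: natural_basis_def rebase_eq_iff)
qed

lemma evo_iso_if_natural_basis:
  assumes "natural_basis B u v" and "rebase B u v = A"
  shows "evo_iso A B"
proof -
  have li: "lin_indep2 u v" and uv: "mult B u v = 0"
    using assms(1) by (simp_all add: natural_basis_def)
  with assms(2) have uu: "mult B u u = of_coord u v (fst A)"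
    and vv: "mult B v v = of_coord u v (snd A)"
    by (simp_all add: rebase_eq_iff)
  have hom: "of_coord u v (mult A x y) = mult B (of_coord u v x) (of_coord u v y)" for x y
    by (simp add: mult_eq_of_coord[of A] of_coord_of_coord mult_of_coord[OF uv] uu vv)
  show "evo_iso A B"
    unfolding evo_iso_def
    by (intro exI[of _ "of_coord u v"] conjI allI bij_of_coord[OF li] of_coord_add of_coord_smul hom)
qed

fun rescale :: "'a::field \<Rightarrow> 'a \<Rightarrow> 'a evalg \<Rightarrow> 'a evalg" where
  "rescale a d ((p, q), (r, s)) = ((a * p, a * a * q / d), (d * d * r / a, d * s))"

fun swap_evalg :: "'a evalg \<Rightarrow> 'a evalg" where
  "swap_evalg ((p, q), (r, s)) = ((s, r), (q, p))"

lemma natural_basis_diag: "a \<noteq> 0 \<Longrightarrow> d \<noteq> 0 \<Longrightarrow> natural_basis A (a, 0) (0, d)"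
  by (simp add: natural_basis_def lin_indep2_iff_det mult_def)

lemma natural_basis_antidiag: "b \<noteq> 0 \<Longrightarrow> c \<noteq> 0 \<Longrightarrow> natural_basis A (0, b) (c, 0)"
  by (simp add: natural_basis_def lin_indep2_iff_det mult_def)

lemma natural_basis_cases:
  fixes p q r s :: "'a::field"
  assumes "p * s \<noteq> q * r" and "natural_basis ((p, q), (r, s)) u v"
  obtains a d where "a \<noteq> 0" "d \<noteq> 0" "u = (a, 0)" "v = (0, d)"
    | b c where "b \<noteq> 0" "c \<noteq> 0" "u = (0, b)" "v = (c, 0)"
proof -
  obtain u1 u2 v1 v2 where uv: "u = (u1, u2)" "v = (v1, v2)"
    by (metis prod.collapse)
  have det: "u1 * v2 \<noteq> u2 * v1" and "mult ((p, q), (r, s)) u v = 0"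
    using assms(2) by (simp_all add: natural_basis_def lin_indep2_iff_det uv)
  then have "smul (u1 * v1) (p, q) + smul (u2 * v2) (r, s) = 0"
    by (simp add: mult_def uv)
  moreover have "lin_indep2 (p, q) (r, s)"
    using assms(1) by (simp add: lin_indep2_iff_det)
  ultimately have "u1 * v1 = 0" "u2 * v2 = 0"
    unfolding lin_indep2_def by blast+
  with det that show thesis
    by (cases "u1 = 0") (auto simp: uv)
qed

lemma rebase_diag:
  "a \<noteq> 0 \<Longrightarrow> d \<noteq> 0 \<Longrightarrow> rebase ((p, q), (r, s)) (a, 0) (0, d) = rescale a d ((p, q), (r, s))"
  by (simp add: rebase_eq_iff lin_indep2_iff_det mult_Pair of_coord_def)

lemma rebase_antidiag:
  "b \<noteq> 0 \<Longrightarrow> c \<noteq> 0 \<Longrightarrow>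
     rebase ((p, q), (r, s)) (0, b) (c, 0) = rescale b c (swap_evalg ((p, q), (r, s)))"
  by (simp add: rebase_eq_iff lin_indep2_iff_det mult_Pair of_coord_def)

definition edge_pattern :: "'a::zero evalg \<Rightarrow> edge set" where
  "edge_pattern A =
     {e. (e = L \<and> fst (fst A) \<noteq> 0) \<or> (e = T \<and> fst (snd A) \<noteq> 0)
       \<or> (e = R \<and> snd (snd A) \<noteq> 0) \<or> (e = D \<and> snd (fst A) \<noteq> 0)}"

lemma all_edge_iff: "(\<forall>e. P e) \<longleftrightarrow> P L \<and> P T \<and> P R \<and> P D"
  by (metis edge.exhaust)

lemma edge_set_eq_iff:
  "(X::edge set) = Y \<longleftrightarrow> (L \<in> X \<longleftrightarrow> L \<in> Y) \<and> (T \<in> X \<longleftrightarrow> T \<in> Y) \<and> (R \<in> X \<longleftrightarrow> R \<in> Y) \<and> (D \<in> X \<longleftrightarrow> D \<in> Y)"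
  by (simp only: set_eq_iff all_edge_iff)

lemma edge_pattern_Pair:
  "edge_pattern ((p, q), (r, s)) =
     (if p \<noteq> 0 then {L} else {}) \<union> (if r \<noteq> 0 then {T} else {})
     \<union> (if s \<noteq> 0 then {R} else {}) \<union> (if q \<noteq> 0 then {D} else {})"
  by (auto simp: edge_pattern_def)

lemma pseudo_square_eq_edge_pattern: "pseudo_square A u v = edge_pattern (rebase A u v)"
  by (simp add: pseudo_square_def edge_pattern_def rebase_def)

lemma edge_pattern_rescale:
  "a \<noteq> 0 \<Longrightarrow> d \<noteq> 0 \<Longrightarrow> edge_pattern (rescale a d ((p, q), (r, s))) = edge_pattern ((p, q), (r, s))"
  by (simp add: edge_pattern_def)

lemma square_eq_edge_patterns:
  fixes p q r s :: "'a::field"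
  assumes "p * s \<noteq> q * r"
  shows "square ((p, q), (r, s)) =
           {edge_pattern ((p, q), (r, s)), edge_pattern (swap_evalg ((p, q), (r, s)))}"
    (is "square ?B = {?E, ?F}")
proof
  show "square ?B \<subseteq> {?E, ?F}"
  proof
    fix E assume "E \<in> square ?B"
    then obtain u v where E: "E = edge_pattern (rebase ?B u v)" and nb: "natural_basis ?B u v"
      unfolding square_def pseudo_square_eq_edge_pattern by blast
    from assms nb show "E \<in> {?E, ?F}"
      by (cases rule: natural_basis_cases)
        (simp_all add: E rebase_diag rebase_antidiag edge_pattern_rescale del: rescale.simps)
  qed
next
  have "?E = pseudo_square ?B (1, 0) (0, 1)" "?F = pseudo_square ?B (0, 1) (1, 0)"
    by (simp_all add: pseudo_square_eq_edge_pattern rebase_diag rebase_antidiag edge_pattern_def)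
  moreover have "natural_basis ?B (1, 0) (0, 1)" "natural_basis ?B (0, 1) (1, 0)"
    by (simp_all add: natural_basis_diag natural_basis_antidiag)
  ultimately show "{?E, ?F} \<subseteq> square ?B"
    unfolding square_def by blast
qed

lemma evo_iso_rescaleI:
  "A = rescale a d ((p, q), (r, s)) \<Longrightarrow> a \<noteq> 0 \<Longrightarrow> d \<noteq> 0 \<Longrightarrow> evo_iso A ((p, q), (r, s))"
  by (rule evo_iso_if_natural_basis[of _ "(a, 0)" "(0, d)"]) (simp_all add: natural_basis_diag rebase_diag)

lemma evo_iso_rescale_swapI:
  "A = rescale a d (swap_evalg ((p, q), (r, s))) \<Longrightarrow> a \<noteq> 0 \<Longrightarrow> d \<noteq> 0 \<Longrightarrow>
     evo_iso A ((p, q), (r, s))"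
  by (rule evo_iso_if_natural_basis[of _ "(0, a)" "(d, 0)"])
    (simp_all add: natural_basis_antidiag rebase_antidiag)

lemma evo_iso_iff_rescale:
  fixes p q r s :: "'a::field"
  assumes "p * s \<noteq> q * r"
  shows "evo_iso A ((p, q), (r, s)) \<longleftrightarrow>
           (\<exists>a d. a \<noteq> 0 \<and> d \<noteq> 0 \<and>
              (A = rescale a d ((p, q), (r, s)) \<or> A = rescale a d (swap_evalg ((p, q), (r, s)))))"
    (is "_ \<longleftrightarrow> ?rescaled")
proof
  assume "evo_iso A ((p, q), (r, s))"
  then obtain u v where nb: "natural_basis ((p, q), (r, s)) u v"
    and A: "A = rebase ((p, q), (r, s)) u v"
    using natural_basis_if_evo_iso by metis
  from assms nb show ?rescaled
  proof (cases rule: natural_basis_cases)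
    case (1 a d)
    then show ?thesis
      using rebase_diag[of a d p q r s] A by blast
  next
    case (2 b c)
    then show ?thesis
      using rebase_antidiag[of b c p q r s] A by blast
  qed
next
  assume ?rescaled
  then obtain a d where "a \<noteq> 0" "d \<noteq> 0"
    and "A = rescale a d ((p, q), (r, s)) \<or> A = rescale a d (swap_evalg ((p, q), (r, s)))"
    by blast
  then show "evo_iso A ((p, q), (r, s))"
    using evo_iso_rescaleI[of A a d p q r s] evo_iso_rescale_swapI[of A a d p q r s] by blast
qed

lemma square_by_zero_pattern:
  fixes p q r s :: "'a::field"
  assumes "p * s \<noteq> q * r"
  shows "square ((p, q), (r, s)) =
    (if q = 0 \<and> r = 0 then D1 else if p = 0 \<and> s = 0 then D2
     else if q = 0 \<or> r = 0 then D3 else if p = 0 \<or> s = 0 then D4 else D5)"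
  using assms
  by (cases "p = 0"; cases "q = 0"; cases "r = 0"; cases "s = 0")
    (simp_all add: square_eq_edge_patterns edge_pattern_Pair D1_def D2_def D3_def D4_def D5_def
      doubleton_eq_iff edge_set_eq_iff)

lemma evo_iso_A1: "q = 0 \<Longrightarrow> r = 0 \<Longrightarrow> p \<noteq> 0 \<Longrightarrow> s \<noteq> 0 \<Longrightarrow> evo_iso ((p, q), (r, s)) A1"
  unfolding A1_def by (rule evo_iso_rescaleI[of _ p s]) simp_all

lemma evo_iso_A2:
  "p = 0 \<Longrightarrow> s = 0 \<Longrightarrow> q \<noteq> 0 \<Longrightarrow> r \<noteq> 0 \<Longrightarrow> \<exists>\<alpha>. \<alpha> \<noteq> 0 \<and> evo_iso ((p, q), (r, s)) (A2 \<alpha>)"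
  unfolding A2_def
  by (intro exI[of _ "r * q * q"] conjI evo_iso_rescaleI[of _ 1 "1 / q"]) (simp_all add: field_simps)

lemma evo_iso_A3:
  "q = 0 \<Longrightarrow> p \<noteq> 0 \<Longrightarrow> r \<noteq> 0 \<Longrightarrow> s \<noteq> 0 \<Longrightarrow> \<exists>\<alpha>. \<alpha> \<noteq> 0 \<and> evo_iso ((p, q), (r, s)) (A3 \<alpha>)"
  unfolding A3_def
  by (intro exI[of _ "r * p / (s * s)"] conjI evo_iso_rescaleI[of _ p s]) (simp_all add: field_simps)

lemma evo_iso_A3_swap:
  "r = 0 \<Longrightarrow> p \<noteq> 0 \<Longrightarrow> q \<noteq> 0 \<Longrightarrow> s \<noteq> 0 \<Longrightarrow> \<exists>\<alpha>. \<alpha> \<noteq> 0 \<and> evo_iso ((p, q), (r, s)) (A3 \<alpha>)"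
  unfolding A3_def
  by (intro exI[of _ "q * s / (p * p)"] conjI evo_iso_rescale_swapI[of _ p s]) (simp_all add: field_simps)

lemma evo_iso_A4:
  "p = 0 \<Longrightarrow> q \<noteq> 0 \<Longrightarrow> r \<noteq> 0 \<Longrightarrow> s \<noteq> 0 \<Longrightarrow> \<exists>\<alpha>. \<alpha> \<noteq> 0 \<and> evo_iso ((p, q), (r, s)) (A4 \<alpha>)"
  unfolding A4_def
  by (intro exI[of _ "q * r * r / (s * s * s)"] conjI evo_iso_rescaleI[of _ "s * s / r" s])
    (simp_all add: field_simps)

lemma evo_iso_A4_swap:
  "s = 0 \<Longrightarrow> p \<noteq> 0 \<Longrightarrow> q \<noteq> 0 \<Longrightarrow> r \<noteq> 0 \<Longrightarrow> \<exists>\<alpha>. \<alpha> \<noteq> 0 \<and> evo_iso ((p, q), (r, s)) (A4 \<alpha>)"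
  unfolding A4_def
  by (intro exI[of _ "r * q * q / (p * p * p)"] conjI evo_iso_rescale_swapI[of _ p "p * p / q"])
    (simp_all add: field_simps)

lemma evo_iso_A5:
  "p * s \<noteq> q * r \<Longrightarrow> p \<noteq> 0 \<Longrightarrow> q \<noteq> 0 \<Longrightarrow> r \<noteq> 0 \<Longrightarrow> s \<noteq> 0 \<Longrightarrow>
     \<exists>\<alpha> \<beta>. \<alpha> \<noteq> 0 \<and> \<beta> \<noteq> 0 \<and> \<alpha> * \<beta> \<noteq> 1 \<and> evo_iso ((p, q), (r, s)) (A5 \<alpha> \<beta>)"
  unfolding A5_def
  by (intro exI[of _ "r * p / (s * s)"] exI[of _ "q * s / (p * p)"] conjI evo_iso_rescaleI[of _ p s])
    (simp_all add: field_simps)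

lemma A3_iso_iff: "\<alpha> \<noteq> 0 \<Longrightarrow> evo_iso (A3 \<alpha>) (A3 \<beta>) \<longleftrightarrow> \<alpha> = \<beta>"
  unfolding A3_def by (subst evo_iso_iff_rescale) auto

lemma A4_iso_iff: "\<beta> \<noteq> 0 \<Longrightarrow> evo_iso (A4 \<alpha>) (A4 \<beta>) \<longleftrightarrow> \<alpha> = \<beta>"
  unfolding A4_def by (subst evo_iso_iff_rescale) auto

lemma A5_iso_iff:
  "\<alpha>' * \<beta>' \<noteq> 1 \<Longrightarrow>
     evo_iso (A5 \<alpha> \<beta>) (A5 \<alpha>' \<beta>') \<longleftrightarrow> (\<alpha>', \<beta>') = (\<alpha>, \<beta>) \<or> (\<alpha>', \<beta>') = (\<beta>, \<alpha>)"
  unfolding A5_def by (subst evo_iso_iff_rescale) (auto simp: mult.commute intro!: exI[of _ 1])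

lemma A2_iso_iff:
  assumes "\<beta> \<noteq> 0"
  shows "evo_iso (A2 \<alpha>) (A2 \<beta>) \<longleftrightarrow> G3_sim \<alpha> \<beta>"
proof -
  have "evo_iso (A2 \<alpha>) (A2 \<beta>) \<longleftrightarrow>
          (\<exists>a d. a \<noteq> 0 \<and> d \<noteq> 0 \<and>
             (A2 \<alpha> = rescale a d ((0, 1), (\<beta>, 0)) \<or> A2 \<alpha> = rescale a d (swap_evalg ((0, 1), (\<beta>, 0)))))"
    (is "_ \<longleftrightarrow> ?rescaled")
    unfolding A2_def[of \<beta>] by (rule evo_iso_iff_rescale) (simp add: assms)
  also have "?rescaled \<longleftrightarrow> (\<exists>c. c \<noteq> 0 \<and> (\<alpha> = c ^ 3 * \<beta> \<or> \<alpha> = c ^ 3 * \<beta> ^ 2))"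
  proof
    assume ?rescaled
    then show "\<exists>c. c \<noteq> 0 \<and> (\<alpha> = c ^ 3 * \<beta> \<or> \<alpha> = c ^ 3 * \<beta> ^ 2)"
      by (auto simp: A2_def field_simps power3_eq_cube power2_eq_square)
  next
    assume "\<exists>c. c \<noteq> 0 \<and> (\<alpha> = c ^ 3 * \<beta> \<or> \<alpha> = c ^ 3 * \<beta> ^ 2)"
    then obtain c where "c \<noteq> 0" and "\<alpha> = c ^ 3 * \<beta> \<or> \<alpha> = c ^ 3 * \<beta> ^ 2"
      by blast
    then show ?rescaled
    proof (elim disjE)
      assume "\<alpha> = c ^ 3 * \<beta>"
      with \<open>c \<noteq> 0\<close> show ?rescaled
        by (intro exI[of _ c] exI[of _ "c * c"]) (simp add: A2_def field_simps power3_eq_cube)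
    next
      assume "\<alpha> = c ^ 3 * \<beta> ^ 2"
      with \<open>c \<noteq> 0\<close> assms show ?rescaled
        by (intro exI[of _ c] exI[of _ "c * c * \<beta>"])
          (simp add: A2_def field_simps power3_eq_cube power2_eq_square)
    qed
  qed
  also have "\<dots> \<longleftrightarrow> G3_sim \<alpha> \<beta>"
    unfolding G3_sim_def cube_eq_def by blast
  finally show ?thesis .
qed

lemma square_A1: "square_full (A1 :: 'a::field evalg) \<and> square (A1 :: 'a evalg) = D1"
  by (simp add: A1_def square_full_iff_lin_indep2 lin_indep2_iff_det square_by_zero_pattern)

lemma square_A2: "\<alpha> \<noteq> 0 \<Longrightarrow> square_full (A2 \<alpha>) \<and> square (A2 \<alpha>) = D2"
  by (simp add: A2_def square_full_iff_lin_indep2 lin_indep2_iff_det square_by_zero_pattern)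

lemma square_A3: "\<alpha> \<noteq> 0 \<Longrightarrow> square_full (A3 \<alpha>) \<and> square (A3 \<alpha>) = D3"
  by (simp add: A3_def square_full_iff_lin_indep2 lin_indep2_iff_det square_by_zero_pattern)

lemma square_A4: "\<alpha> \<noteq> 0 \<Longrightarrow> square_full (A4 \<alpha>) \<and> square (A4 \<alpha>) = D4"
  by (simp add: A4_def square_full_iff_lin_indep2 lin_indep2_iff_det square_by_zero_pattern)

lemma square_A5:
  "\<alpha> \<noteq> 0 \<Longrightarrow> \<beta> \<noteq> 0 \<Longrightarrow> \<alpha> * \<beta> \<noteq> 1 \<Longrightarrow> square_full (A5 \<alpha> \<beta>) \<and> square (A5 \<alpha> \<beta>) = D5"
  by (simp add: A5_def square_full_iff_lin_indep2 lin_indep2_iff_det square_by_zero_pattern mult.commute)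

lemma D_distinct: "D1 \<noteq> D2" "D1 \<noteq> D3" "D1 \<noteq> D4" "D1 \<noteq> D5" "D2 \<noteq> D3" "D2 \<noteq> D4" "D2 \<noteq> D5"
  "D3 \<noteq> D4" "D3 \<noteq> D5" "D4 \<noteq> D5"
  by (simp_all add: D1_def D2_def D3_def D4_def D5_def doubleton_eq_iff edge_set_eq_iff)

lemma normal_form_cases:
  fixes p q r s :: "'a::field"
  assumes "p * s \<noteq> q * r"
  obtains "square ((p, q), (r, s)) = D1" "evo_iso ((p, q), (r, s)) A1"
    | \<alpha> where "\<alpha> \<noteq> 0" "square ((p, q), (r, s)) = D2" "evo_iso ((p, q), (r, s)) (A2 \<alpha>)"
    | \<alpha> where "\<alpha> \<noteq> 0" "square ((p, q), (r, s)) = D3" "evo_iso ((p, q), (r, s)) (A3 \<alpha>)"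
    | \<alpha> where "\<alpha> \<noteq> 0" "square ((p, q), (r, s)) = D4" "evo_iso ((p, q), (r, s)) (A4 \<alpha>)"
    | \<alpha> \<beta> where "\<alpha> \<noteq> 0" "\<beta> \<noteq> 0" "\<alpha> * \<beta> \<noteq> 1"
        "square ((p, q), (r, s)) = D5" "evo_iso ((p, q), (r, s)) (A5 \<alpha> \<beta>)"
  using assms that evo_iso_A1[of q r p s] evo_iso_A2[of p s q r] evo_iso_A3[of q p r s]
    evo_iso_A3_swap[of r p q s] evo_iso_A4[of p q r s] evo_iso_A4_swap[of s p q r] evo_iso_A5[of p s q r]
  unfolding square_by_zero_pattern[OF assms]
  by (cases "q = 0"; cases "r = 0"; cases "p = 0"; cases "s = 0") auto

theorem theorem3p7:
  fixes A :: "'a::field evalg"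
  assumes "square_full A"
  shows "square A \<in> {D1, D2, D3, D4, D5}
    \<and> (square A = D1 \<longrightarrow> evo_iso A A1)
    \<and> (square A = D2 \<longrightarrow> (\<exists>\<alpha>. \<alpha> \<noteq> 0 \<and> evo_iso A (A2 \<alpha>)))
    \<and> (square A = D3 \<longrightarrow> (\<exists>\<alpha>. \<alpha> \<noteq> 0 \<and> evo_iso A (A3 \<alpha>)))
    \<and> (square A = D4 \<longrightarrow> (\<exists>\<alpha>. \<alpha> \<noteq> 0 \<and> evo_iso A (A4 \<alpha>)))
    \<and> (square A = D5 \<longrightarrow> (\<exists>\<alpha> \<beta>. \<alpha> \<noteq> 0 \<and> \<beta> \<noteq> 0 \<and> \<alpha> * \<beta> \<noteq> 1 \<and> evo_iso A (A5 \<alpha> \<beta>)))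
    \<and> (square_full (A1 :: 'a evalg) \<and> square (A1 :: 'a evalg) = D1)
    \<and> (\<forall>\<alpha>::'a. \<alpha> \<noteq> 0 \<longrightarrow> square_full (A2 \<alpha>) \<and> square (A2 \<alpha>) = D2)
    \<and> (\<forall>\<alpha> \<beta>::'a. \<alpha> \<noteq> 0 \<longrightarrow> \<beta> \<noteq> 0 \<longrightarrow> (evo_iso (A2 \<alpha>) (A2 \<beta>) \<longleftrightarrow> G3_sim \<alpha> \<beta>))
    \<and> (\<forall>\<alpha>::'a. \<alpha> \<noteq> 0 \<longrightarrow> square_full (A3 \<alpha>) \<and> square (A3 \<alpha>) = D3)
    \<and> (\<forall>\<alpha> \<beta>::'a. \<alpha> \<noteq> 0 \<longrightarrow> \<beta> \<noteq> 0 \<longrightarrow> (evo_iso (A3 \<alpha>) (A3 \<beta>) \<longleftrightarrow> \<alpha> = \<beta>))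
    \<and> (\<forall>\<alpha>::'a. \<alpha> \<noteq> 0 \<longrightarrow> square_full (A4 \<alpha>) \<and> square (A4 \<alpha>) = D4)
    \<and> (\<forall>\<alpha> \<beta>::'a. \<alpha> \<noteq> 0 \<longrightarrow> \<beta> \<noteq> 0 \<longrightarrow> (evo_iso (A4 \<alpha>) (A4 \<beta>) \<longleftrightarrow> \<alpha> = \<beta>))
    \<and> (\<forall>\<alpha> \<beta>::'a. \<alpha> \<noteq> 0 \<longrightarrow> \<beta> \<noteq> 0 \<longrightarrow> \<alpha> * \<beta> \<noteq> 1 \<longrightarrow>
          square_full (A5 \<alpha> \<beta>) \<and> square (A5 \<alpha> \<beta>) = D5)
    \<and> (\<forall>\<alpha> \<beta> \<alpha>' \<beta>'::'a. \<alpha> \<noteq> 0 \<longrightarrow> \<beta> \<noteq> 0 \<longrightarrow> \<alpha> * \<beta> \<noteq> 1 \<longrightarrow>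
          \<alpha>' \<noteq> 0 \<longrightarrow> \<beta>' \<noteq> 0 \<longrightarrow> \<alpha>' * \<beta>' \<noteq> 1 \<longrightarrow>
          (evo_iso (A5 \<alpha> \<beta>) (A5 \<alpha>' \<beta>') \<longleftrightarrow> (\<alpha>', \<beta>') = (\<alpha>, \<beta>) \<or> (\<alpha>', \<beta>') = (\<beta>, \<alpha>)))"
proof -
  obtain p q r s where A: "A = ((p, q), (r, s))"
    by (metis prod.collapse)
  have "p * s \<noteq> q * r"
    using assms by (simp add: A square_full_iff_lin_indep2 lin_indep2_iff_det)
  then show ?thesis
    by (cases rule: normal_form_cases)
      (auto simp: A D_distinct D_distinct[THEN not_sym] square_A1 square_A2 square_A3 square_A4
        square_A5 A2_iso_iff A3_iso_iff A4_iso_iff A5_iso_iff)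
qed

end
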